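(* Let $\lambda_1,\lambda_2\in P^+$ and $\lambda=\lambda_1+\lambda_2$. Then $F_{\lambda_1,\lambda_2}$ is isomorphic to the $\mathfrak{sl}_n\otimes\mathbb C[t]$-module generated by a vector $w$ subject to the relations $(\mathfrak n^+\otimes\mathbb C[t]).w=0$, $(\mathfrak h\otimes t\mathbb C[t]).w=0$, $(\mathfrak n^-\otimes t^2\mathbb C[t]).w=0$, and for all $\alpha\in R^+$ and $h\in\mathfrak h$: $(f_\alpha\otimes 1)^{\lambda(h_\alpha)+1}.w=0$, $(f_\alpha\otimes t)^{\min\{\lambda_1(h_\alpha),\lambda_2(h_\alpha)\}+1}.w=0$, $(h\otimes 1-\lambda(h)).w=0$.
   Context: Let $\mathfrak{sl}_n=\mathfrak n^+\oplus\mathfrak h\oplus\mathfrak n^-$, $\mathfrak b=\mathfrak n^+\oplus\mathfrak h$, $R^+$ the positive roots, $P^+$ the dominant integral weights; for $\alpha\in R^+$ fix an $\mathfrak{sl}_2$-triple $e_\alpha,f_\alpha,h_\alpha$ with $f_\alpha\in\mathfrak g_{-\alpha}$. The current algebra $\mathfrak{sl}_n\otimes\mathbb C[t]$ has bracket $[x\otimes p,y\otimes q]=[x,y]\otimes pq$. For $\lambda_1,\lambda_2\in P^+$, let $\mathbb C_{\lambda_1+\lambda_2}$ be the one-dimensional $\mathfrak b\otimes\mathbb C[t]$-module obtained from the composite $\mathfrak b\otimes\mathbb C[t]\to\mathfrak b\to\mathfrak h$ (evaluation at $t=0$, then killing $\mathfrak n^+$) with $\mathfrak h$ acting by $\lambda_1+\lambda_2$.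 Let $\mathfrak a=(\mathfrak b\otimes 1)\oplus(\mathfrak{sl}_n\otimes t\mathbb C[t])$, and let $M_{\lambda_1,\lambda_2}$ be the quotient of the induced module $U(\mathfrak a)\otimes_{U(\mathfrak b\otimes\mathbb C[t])}\mathbb C_{\lambda_1+\lambda_2}$ by the submodule generated by $(\mathfrak n^-\otimes t^2\mathbb C[t])$ applied to the generator and by $(f_\alpha\otimes t)^{\min\{\lambda_1(h_\alpha),\lambda_2(h_\alpha)\}+1}$ applied to the generator, for all $\alpha\in R^+$. Then $F_{\lambda_1,\lambda_2}$ is defined as the maximal quotient of $U(\mathfrak{sl}_n\otimes\mathbb C[t])\otimes_{U(\mathfrak a)}M_{\lambda_1,\lambda_2}$ which is integrable as an $\mathfrak{sl}_n$-module (i.e. on which all $e_\alpha,f_\alpha$ act locally nilpotently). *)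

theory Defs
  imports "HOL-Analysis.Analysis"
begin

text \<open>Conventions. sl_n is realised as the traceless matrices in complex^'n^'n,
 where the finite index type 'n carries a linear order (fixing the Borel:
 n+ = strictly upper triangular, h = traceless diagonal, n- = strictly lower
 triangular). An element of the current algebra sl_n tensor C[t] is a function
 x :: nat => complex^'n^'n with finite support, x k being the coefficient of t^k.\<close>

type_synonym ('n) cur = "nat \<Rightarrow> complex^'n^'n"

definition smat :: "complex \<Rightarrow> complex^'n::finite^'n \<Rightarrow> complex^'n^'n" where
  "smat c A = (\<chi> i j. c * A$i$j)"

definition Emat :: "'n::finite \<Rightarrow> 'n \<Rightarrow> complex^'n^'n" where
  "Emat i j = (\<chi> a b. if a = i \<and> b = j then 1 else 0)"

definition curalg :: "'n::finite cur set" where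
  "curalg = {x. finite {k. x k \<noteq> 0} \<and> (\<forall>k. trace (x k) = 0)}"

definition cbr :: "'n::finite cur \<Rightarrow> 'n cur \<Rightarrow> 'n cur" where
  "cbr x y = (\<lambda>k. \<Sum>p\<le>k. x p ** y (k - p) - y (k - p) ** x p)"

definition cscale :: "complex \<Rightarrow> 'n::finite cur \<Rightarrow> 'n cur" where
  "cscale c x = (\<lambda>k. smat c (x k))"

definition cadd :: "'n::finite cur \<Rightarrow> 'n cur \<Rightarrow> 'n cur" where
  "cadd x y = (\<lambda>k. x k + y k)"

definition mono :: "complex^'n::finite^'n \<Rightarrow> nat \<Rightarrow> 'n cur" where
  "mono X k = (\<lambda>m. if m = k then X else 0)"

definition cartan :: "(complex^'n::finite^'n) set" where
  "cartan = {H. trace H = 0 \<and> (\<forall>i j. i \<noteq> j \<longrightarrow> H$i$j = 0)}"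

definition nplus_cur :: "'n::{finite,linorder} cur set" where
  "nplus_cur = {x \<in> curalg. \<forall>k a b. b \<le> a \<longrightarrow> x k $ a $ b = 0}"

definition nplus_1 :: "'n::{finite,linorder} cur set" where
  "nplus_1 = {x \<in> nplus_cur. \<forall>k>0. x k = 0}"

definition h_tpos :: "'n::finite cur set" where
  "h_tpos = {x \<in> curalg. x 0 = 0 \<and> (\<forall>k a b. a \<noteq> b \<longrightarrow> x k $ a $ b = 0)}"

definition b_tpos :: "'n::{finite,linorder} cur set" where
  "b_tpos = {x \<in> curalg. x 0 = 0 \<and> (\<forall>k a b. b < a \<longrightarrow> x k $ a $ b = 0)}"

definition nminus_t2 :: "'n::{finite,linorder} cur set" where
  "nminus_t2 = {x \<in> curalg. x 0 = 0 \<and> x 1 = 0 \<and> (\<forall>k a b. a \<le> b \<longrightarrow> x k $ a $ b = 0)}"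

text \<open>Weights: an integral weight is given by lam :: 'n => int, acting on
 diagonal H by sum_i lam i * H_ii (well defined on traceless H up to constants).
 For the positive root alpha = eps_i - eps_j (i < j): e_alpha = E_ij,
 f_alpha = E_ji, h_alpha = E_ii - E_jj, so lam(h_alpha) = lam i - lam j.\<close>
definition wt :: "('n::finite \<Rightarrow> int) \<Rightarrow> complex^'n^'n \<Rightarrow> complex" where
  "wt lam H = (\<Sum>i\<in>UNIV. of_int (lam i) * H$i$i)"

definition dominant :: "('n::linorder \<Rightarrow> int) \<Rightarrow> bool" where
  "dominant lam \<longleftrightarrow> (\<forall>i j. i \<le> j \<longrightarrow> lam j \<le> lam i)"

definition hval :: "('n \<Rightarrow> int) \<Rightarrow> 'n \<Rightarrow> 'n \<Rightarrow> nat" where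
  "hval lam i j = nat (lam i - lam j)"

definition is_rep :: "(complex \<Rightarrow> 'v::ab_group_add \<Rightarrow> 'v) \<Rightarrow> ('n::finite cur \<Rightarrow> 'v \<Rightarrow> 'v) \<Rightarrow> bool" where
  "is_rep sc \<rho> \<longleftrightarrow> vector_space sc \<and>
     (\<forall>x\<in>curalg. \<forall>u v. \<rho> x (u + v) = \<rho> x u + \<rho> x v) \<and>
     (\<forall>x\<in>curalg. \<forall>c u. \<rho> x (sc c u) = sc c (\<rho> x u)) \<and>
     (\<forall>x\<in>curalg. \<forall>y\<in>curalg. \<forall>u. \<rho> (cadd x y) u = \<rho> x u + \<rho> y u) \<and>
     (\<forall>x\<in>curalg. \<forall>c u. \<rho> (cscale c x) u = sc c (\<rho> x u)) \<and>
     (\<forall>x\<in>curalg. \<forall>y\<in>curalg. \<forall>u. \<rho> (cbr x y) u = \<rho> x (\<rho> y u) - \<rho> y (\<rho> x u))"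

inductive_set gsub :: "(complex \<Rightarrow> 'v::ab_group_add \<Rightarrow> 'v) \<Rightarrow> ('n::finite cur \<Rightarrow> 'v \<Rightarrow> 'v) \<Rightarrow> 'v \<Rightarrow> 'v set"
  for sc \<rho> w where
  gen: "w \<in> gsub sc \<rho> w"
| act: "u \<in> gsub sc \<rho> w \<Longrightarrow> x \<in> curalg \<Longrightarrow> \<rho> x u \<in> gsub sc \<rho> w"
| add: "u \<in> gsub sc \<rho> w \<Longrightarrow> v \<in> gsub sc \<rho> w \<Longrightarrow> u + v \<in> gsub sc \<rho> w"
| smult: "u \<in> gsub sc \<rho> w \<Longrightarrow> sc c u \<in> gsub sc \<rho> w"

text \<open>Integrable as sl_n-module: all e_alpha, f_alpha (i.e. all E_ij tensor 1,
 i /= j) act locally nilpotently.\<close>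
definition sl_integrable :: "('n::finite cur \<Rightarrow> 'v::zero \<Rightarrow> 'v) \<Rightarrow> 'v set \<Rightarrow> bool" where
  "sl_integrable \<rho> S \<longleftrightarrow>
     (\<forall>i j. i \<noteq> j \<longrightarrow> (\<forall>u\<in>S. \<exists>m. (\<rho> (mono (Emat i j) 0) ^^ m) u = 0))"

definition F_rel :: "(complex \<Rightarrow> 'v::ab_group_add \<Rightarrow> 'v) \<Rightarrow> ('n::{finite,linorder} cur \<Rightarrow> 'v \<Rightarrow> 'v)
    \<Rightarrow> ('n \<Rightarrow> int) \<Rightarrow> ('n \<Rightarrow> int) \<Rightarrow> 'v \<Rightarrow> bool" where
  "F_rel sc \<rho> lam1 lam2 w \<longleftrightarrow>
     (\<forall>x\<in>b_tpos. \<rho> x w = 0) \<and>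
     (\<forall>x\<in>nplus_1. \<rho> x w = 0) \<and>
     (\<forall>H\<in>cartan. \<rho> (mono H 0) w = sc (wt (\<lambda>i. lam1 i + lam2 i) H) w) \<and>
     (\<forall>x\<in>nminus_t2. \<rho> x w = 0) \<and>
     (\<forall>i j. i < j \<longrightarrow>
        (\<rho> (mono (Emat j i) 1) ^^ (min (hval lam1 i j) (hval lam2 i j) + 1)) w = 0)"

definition W_rel :: "(complex \<Rightarrow> 'v::ab_group_add \<Rightarrow> 'v) \<Rightarrow> ('n::{finite,linorder} cur \<Rightarrow> 'v \<Rightarrow> 'v)
    \<Rightarrow> ('n \<Rightarrow> int) \<Rightarrow> ('n \<Rightarrow> int) \<Rightarrow> 'v \<Rightarrow> bool" where
  "W_rel sc \<rho> lam1 lam2 w \<longleftrightarrow>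
     (\<forall>x\<in>nplus_cur. \<rho> x w = 0) \<and>
     (\<forall>x\<in>h_tpos. \<rho> x w = 0) \<and>
     (\<forall>x\<in>nminus_t2. \<rho> x w = 0) \<and>
     (\<forall>i j. i < j \<longrightarrow>
        (\<rho> (mono (Emat j i) 0) ^^ (hval (\<lambda>k. lam1 k + lam2 k) i j + 1)) w = 0) \<and>
     (\<forall>i j. i < j \<longrightarrow>
        (\<rho> (mono (Emat j i) 1) ^^ (min (hval lam1 i j) (hval lam2 i j) + 1)) w = 0) \<and>
     (\<forall>H\<in>cartan. \<rho> (mono H 0) w = sc (wt (\<lambda>i. lam1 i + lam2 i) H) w)"

end

theory Submission
  imports Defs
begin

text \<open>Since b tensor tC[t] is the sum of n+ tensor tC[t] and h tensor tC[t], the relations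
 of W imply those of F. For integrability, each E_ij tensor 1 is locally nilpotent on w by the
 relations of W and acts ad-nilpotently on the current algebra (E_ij squares to zero), so by
 the Leibniz rule it is locally nilpotent on the whole submodule generated by w.
 Conversely, n+ tensor C[t] is the sum of n+ tensor 1 and n+ tensor tC[t], and the only
 remaining relation is (f_alpha tensor 1)^(m+1) w = 0 with m = lam(h_alpha): the sl_2-triple
 (E_ij, E_ji, E_ii - E_jj) acts on the highest-weight vector w, and
 e f^(k+1) w = (k+1)(m-k) f^k w together with f^N w = 0 forces f^(m+1) w = 0.\<close>

lemma Emat_mult: "Emat a b ** Emat c d = (if b = c then Emat a d else 0)"
proof -
  have "(Emat a b ** Emat c d) $ x $ y = (if b = c then Emat a d else 0) $ x $ y" for x y
  proof -
    have "(Emat a b ** Emat c d) $ x $ y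
        = (\<Sum>k\<in>UNIV. (if x = a \<and> k = b then 1 else 0) * (if k = c \<and> y = d then 1 else 0))"
      by (simp add: matrix_matrix_mult_def Emat_def)
    also have "\<dots> = (\<Sum>k\<in>UNIV. if k = b then (if x = a \<and> b = c \<and> y = d then 1 else 0) else 0)"
      by (rule sum.cong) auto
    also have "\<dots> = (if b = c then Emat a d else 0) $ x $ y"
      by (simp add: Emat_def)
    finally show ?thesis .
  qed
  then show ?thesis by (simp add: vec_eq_iff)
qed

lemma trace_Emat: "trace (Emat i j) = (if i = j then 1 else 0)"
  by (cases "i = j") (auto simp: trace_def Emat_def intro!: sum.neutral)

lemma matrix_diff_ldistrib: "(A::'a::comm_ring_1^'n::finite^'m) ** (B - C) = A ** B - A ** C"
  by (simp add: matrix_matrix_mult_def vec_eq_iff sum_subtractf algebra_simps)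

lemma matrix_diff_rdistrib: "((A::'a::comm_ring_1^'n::finite^'m) - B) ** C = A ** C - B ** C"
  by (simp add: matrix_matrix_mult_def vec_eq_iff sum_subtractf algebra_simps)

lemma mono_in_curalg:
  assumes "trace A = 0" shows "mono A k \<in> curalg"
proof -
  have "{m. mono A k m \<noteq> 0} \<subseteq> {k}" by (auto simp: mono_def)
  then show ?thesis using assms by (auto simp: curalg_def mono_def trace_def intro: finite_subset)
qed

lemma zero_in_curalg: "(\<lambda>_. 0) \<in> curalg"
  by (simp add: curalg_def trace_def)

lemma curalg_eventually_zero:
  assumes "x \<in> curalg" obtains N where "\<And>k. N < k \<Longrightarrow> x k = 0"
proof -
  have "finite {k. x k \<noteq> 0}" using assms by (simp add: curalg_def)
  then obtain N where "\<forall>k\<in>{k. x k \<noteq> 0}. k \<le> N" using finite_nat_set_iff_bounded_le by blast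
  then show ?thesis by (intro that) (auto simp: not_le[symmetric])
qed

lemma cbr_in_curalg:
  assumes x: "x \<in> curalg" and y: "y \<in> curalg"
  shows "cbr x y \<in> curalg"
proof -
  obtain Nx where Nx: "\<And>k. Nx < k \<Longrightarrow> x k = 0" using curalg_eventually_zero[OF x] by blast
  obtain Ny where Ny: "\<And>k. Ny < k \<Longrightarrow> y k = 0" using curalg_eventually_zero[OF y] by blast
  have high: "cbr x y k = 0" if "Nx + Ny < k" for k
    unfolding cbr_def
  proof (rule sum.neutral, intro ballI)
    fix p assume "p \<in> {..k}"
    then have "Nx < p \<or> Ny < k - p" using that by auto
    then show "x p ** y (k - p) - y (k - p) ** x p = 0" using Nx Ny by auto
  qed
  have "{k. cbr x y k \<noteq> 0} \<subseteq> {..Nx + Ny}"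
  proof
    fix k assume "k \<in> {k. cbr x y k \<noteq> 0}"
    then show "k \<in> {..Nx + Ny}" using high[of k] by (cases "Nx + Ny < k") auto
  qed
  moreover have "trace (cbr x y k) = 0" for k
  proof -
    have "trace (cbr x y k) = (\<Sum>p\<le>k. trace (x p ** y (k - p) - y (k - p) ** x p))"
      unfolding cbr_def trace_def sum_component by (rule sum.swap)
    also have "\<dots> = 0" by (simp add: trace_sub trace_mul_sym[of "x _"])
    finally show ?thesis .
  qed
  ultimately show ?thesis by (auto simp: curalg_def intro: finite_subset)
qed

lemma cbr_zero_right: "cbr x (\<lambda>_. 0) = (\<lambda>_. 0)"
  by (simp add: cbr_def)

lemma cbr_mono_0_left: "cbr (mono A 0) y = (\<lambda>k. A ** y k - y k ** A)"
proof
  fix k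
  have "cbr (mono A 0) y k = (\<Sum>p\<le>k. if p = 0 then A ** y (k - p) - y (k - p) ** A else 0)"
    unfolding cbr_def by (rule sum.cong) (auto simp: mono_def)
  then show "cbr (mono A 0) y k = A ** y k - y k ** A" by simp
qed

lemma cbr_mono_0: "cbr (mono A 0) (mono B 0) = mono (A ** B - B ** A) 0"
  unfolding cbr_mono_0_left by (auto simp: mono_def)

lemma cscale_mono: "cscale c (mono X k) = mono (smat c X) k"
  by (auto simp: cscale_def mono_def smat_def vec_eq_iff)

text \<open>Since ad(A)^3 Y = A^3 Y - 3 A^2 Y A + 3 A Y A^2 - Y A^3, a square-zero A acts
 ad-nilpotently.\<close>
lemma cbr_mono_0_cube:
  fixes A :: "complex^'n::finite^'n"
  assumes AA: "A ** A = 0"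
  shows "(cbr (mono A 0) ^^ 3) y = (\<lambda>_. 0)"
proof -
  have AA': "Z ** A ** A = 0" for Z :: "complex^'n^'n"
    by (metis AA matrix_mul_assoc times0_right)
  show ?thesis
    unfolding numeral_3_eq_3 funpow.simps o_apply id_apply cbr_mono_0_left
    by (simp only: matrix_diff_ldistrib matrix_diff_rdistrib matrix_mul_assoc)
       (simp only: AA AA' times0_left times0_right diff_self)
qed

lemma cbr_Emat_swap:
  "i \<noteq> j \<Longrightarrow> cbr (mono (Emat i j) 0) (mono (Emat j i) 0) = mono (Emat i i - Emat j j) 0"
  by (simp add: cbr_mono_0 Emat_mult)

lemma cbr_Emat_diff_Emat:
  assumes "i \<noteq> j"
  shows "cbr (mono (Emat i i - Emat j j) 0) (mono (Emat j i) 0) = cscale (-2) (mono (Emat j i) 0)"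
proof -
  have "(Emat i i - Emat j j) ** Emat j i - Emat j i ** (Emat i i - Emat j j) = smat (-2) (Emat j i)"
    using assms by (simp add: matrix_diff_ldistrib matrix_diff_rdistrib Emat_mult smat_def vec_eq_iff)
  then show ?thesis by (simp add: cbr_mono_0 cscale_mono)
qed

locale current_rep =
  fixes sc :: "complex \<Rightarrow> 'v::ab_group_add \<Rightarrow> 'v" and \<rho> :: "'n::finite cur \<Rightarrow> 'v \<Rightarrow> 'v"
  assumes rep: "is_rep sc \<rho>"
begin

sublocale vector_space sc
  using rep by (simp add: is_rep_def)

lemma act_add: "x \<in> curalg \<Longrightarrow> \<rho> x (u + v) = \<rho> x u + \<rho> x v"
  using rep by (simp add: is_rep_def)

lemma act_scale: "x \<in> curalg \<Longrightarrow> \<rho> x (sc c u) = sc c (\<rho> x u)"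
  using rep by (simp add: is_rep_def)

lemma act_cadd: "x \<in> curalg \<Longrightarrow> y \<in> curalg \<Longrightarrow> \<rho> (cadd x y) u = \<rho> x u + \<rho> y u"
  using rep by (simp add: is_rep_def)

lemma act_cscale: "x \<in> curalg \<Longrightarrow> \<rho> (cscale c x) u = sc c (\<rho> x u)"
  using rep by (simp add: is_rep_def)

lemma act_cbr: "x \<in> curalg \<Longrightarrow> y \<in> curalg \<Longrightarrow> \<rho> (cbr x y) u = \<rho> x (\<rho> y u) - \<rho> y (\<rho> x u)"
  using rep by (simp add: is_rep_def)

lemma act_zero_right: "x \<in> curalg \<Longrightarrow> \<rho> x 0 = 0"
  using act_add[of x 0 0] by simp

lemma act_zero_left: "\<rho> (\<lambda>_. 0) u = 0"
proof -
  have "cadd (\<lambda>_. 0) (\<lambda>_. 0) = ((\<lambda>_. 0) :: 'n cur)" by (simp add: cadd_def)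
  then show ?thesis using act_cadd[OF zero_in_curalg zero_in_curalg, of u] by simp
qed

lemma act_funpow_zero: "x \<in> curalg \<Longrightarrow> (\<rho> x ^^ m) 0 = 0"
  by (induction m) (auto simp: act_zero_right)

lemma act_funpow_add: "x \<in> curalg \<Longrightarrow> (\<rho> x ^^ m) (u + v) = (\<rho> x ^^ m) u + (\<rho> x ^^ m) v"
  by (induction m) (auto simp: act_add)

lemma act_funpow_scale: "x \<in> curalg \<Longrightarrow> (\<rho> x ^^ m) (sc c u) = sc c ((\<rho> x ^^ m) u)"
  by (induction m) (auto simp: act_scale)

context
  fixes E F H :: "'n cur"
  assumes E: "E \<in> curalg" and F: "F \<in> curalg" and H: "H \<in> curalg"
    and EF: "cbr E F = H" and HF: "cbr H F = cscale (-2) F"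
begin

lemma sl2_weight_lower_power:
  assumes "\<rho> H w = sc m w"
  shows "\<rho> H ((\<rho> F ^^ k) w) = sc (m - 2 * of_nat k) ((\<rho> F ^^ k) w)"
proof (induction k)
  case 0
  show ?case using assms by simp
next
  case (Suc k)
  have "\<rho> H ((\<rho> F ^^ Suc k) w) = \<rho> F (\<rho> H ((\<rho> F ^^ k) w)) + sc (-2) ((\<rho> F ^^ Suc k) w)"
    using act_cbr[OF H F] act_cscale[OF F] by (simp add: HF)
  also have "\<dots> = sc (m - 2 * of_nat k) ((\<rho> F ^^ Suc k) w) + sc (-2) ((\<rho> F ^^ Suc k) w)"
    by (simp add: Suc act_scale[OF F])
  also have "\<dots> = sc (m - 2 * of_nat (Suc k)) ((\<rho> F ^^ Suc k) w)"
    by (simp only: scale_left_distrib[symmetric]) (simp add: ring_distribs)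
  finally show ?case .
qed

lemma sl2_raise_lower_power:
  assumes hw: "\<rho> E w = 0" and wt: "\<rho> H w = sc m w"
  shows "\<rho> E ((\<rho> F ^^ Suc k) w) = sc ((of_nat k + 1) * (m - of_nat k)) ((\<rho> F ^^ k) w)"
proof (induction k)
  case 0
  show ?case using act_cbr[OF E F, of w] by (simp add: EF hw wt act_zero_right[OF F])
next
  case (Suc k)
  have lower_Suc: "\<rho> F ((\<rho> F ^^ n) w) = (\<rho> F ^^ Suc n) w" for n by simp
  have "\<rho> E ((\<rho> F ^^ Suc (Suc k)) w)
      = \<rho> F (\<rho> E ((\<rho> F ^^ Suc k) w)) + \<rho> H ((\<rho> F ^^ Suc k) w)"
    using act_cbr[OF E F] by (simp add: EF)
  also have "\<dots> = sc ((of_nat k + 1) * (m - of_nat k)) ((\<rho> F ^^ Suc k) w)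
      + sc (m - 2 * of_nat (Suc k)) ((\<rho> F ^^ Suc k) w)"
    by (simp only: Suc sl2_weight_lower_power[OF wt] act_scale[OF F] lower_Suc)
  also have "\<dots> = sc ((of_nat (Suc k) + 1) * (m - of_nat (Suc k))) ((\<rho> F ^^ Suc k) w)"
    by (simp only: scale_left_distrib[symmetric]) (simp add: ring_distribs)
  finally show ?case .
qed

text \<open>If f^N w = 0 for the least such N > 0, then e f^N w = N (m - N + 1) f^(N-1) w = 0
 with f^(N-1) w \<noteq> 0, whence m = N - 1.\<close>
lemma sl2_lower_power_vanishes:
  assumes hw: "\<rho> E w = 0" and wt: "\<rho> H w = sc (of_nat M) w"
    and nil: "(\<rho> F ^^ n) w = 0"
  shows "(\<rho> F ^^ (M + 1)) w = 0"
proof -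
  define N where "N = (LEAST N. (\<rho> F ^^ N) w = 0)"
  have N: "(\<rho> F ^^ N) w = 0" unfolding N_def using nil by (rule LeastI)
  have least: "(\<rho> F ^^ k) w \<noteq> 0" if "k < N" for k
    using that unfolding N_def by (rule not_less_Least)
  show ?thesis
  proof (cases N)
    case 0
    then show ?thesis using N act_funpow_zero[OF F] act_zero_right[OF F] by simp
  next
    case (Suc K)
    have "sc ((of_nat K + 1) * (of_nat M - of_nat K)) ((\<rho> F ^^ K) w) = 0"
      using sl2_raise_lower_power[OF hw wt, of K] N Suc act_zero_right[OF E] by simp
    moreover have "(\<rho> F ^^ K) w \<noteq> 0" using least Suc by simp
    ultimately have "(of_nat K + 1) * (of_nat M - of_nat K) = (0::complex)"
      by simp
    then have "K = M" using of_nat_neq_0[of K, where 'a = complex] by (auto simp: add.commute)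
    then show ?thesis using N Suc by simp
  qed
qed

end

text \<open>Leibniz rule X (Y v) = Y (X v) + [X,Y] v: each application of X either moves past the
 iterated bracket or raises its order, so X^(m+d) (y u) is a sum of terms
 (ad X)^k y (X^l u) with k + l = m + d, each of which vanishes.\<close>
lemma act_funpow_ad_nilpotent:
  assumes X: "X \<in> curalg" and y: "y \<in> curalg"
    and ad_nil: "(cbr X ^^ d) y = (\<lambda>_. 0)" and u: "(\<rho> X ^^ m) u = 0"
  shows "(\<rho> X ^^ (m + d)) (\<rho> y u) = 0"
proof -
  define Y where "Y k = (cbr X ^^ k) y" for k
  have Y_curalg: "Y k \<in> curalg" for k
    by (induction k) (simp_all add: Y_def y cbr_in_curalg X)
  have Y_vanish: "Y k = (\<lambda>_. 0)" if "d \<le> k" for k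
  proof -
    define e where "e = k - d"
    have "k = e + d" using that by (simp add: e_def)
    then show ?thesis by (induction e arbitrary: k) (simp_all add: Y_def ad_nil cbr_zero_right)
  qed
  have leibniz: "\<rho> X (\<rho> (Y k) v) = \<rho> (Y k) (\<rho> X v) + \<rho> (Y (Suc k)) v" for k v
    using act_cbr[OF X Y_curalg[of k], of v] by (simp add: Y_def)
  have "(\<rho> X ^^ n) (\<rho> (Y k) ((\<rho> X ^^ l) u)) = 0" if "m + d \<le> n + k + l" for n k l
    using that
  proof (induction n arbitrary: k l)
    case 0
    then consider "d \<le> k" | "m \<le> l" by linarith
    then show ?case
    proof cases
      case 1
      then show ?thesis by (simp add: Y_vanish act_zero_left)
    next
      case 2
      then have "(\<rho> X ^^ l) u = (\<rho> X ^^ (l - m)) ((\<rho> X ^^ m) u)"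
        using funpow_add[of "l - m" m "\<rho> X"] by simp
      then show ?thesis by (simp add: u act_funpow_zero[OF X] act_zero_right[OF Y_curalg])
    qed
  next
    case (Suc n)
    have "(\<rho> X ^^ Suc n) (\<rho> (Y k) ((\<rho> X ^^ l) u))
        = (\<rho> X ^^ n) (\<rho> (Y k) ((\<rho> X ^^ Suc l) u)) + (\<rho> X ^^ n) (\<rho> (Y (Suc k)) ((\<rho> X ^^ l) u))"
      by (simp only: funpow_Suc_right[of n "\<rho> X"] o_apply leibniz act_funpow_add[OF X]) simp
    also have "\<dots> = 0"
      using Suc.IH[of k "Suc l"] Suc.IH[of "Suc k" l] Suc.prems by (simp del: funpow.simps)
    finally show ?case .
  qed
  from this[of "m + d" 0 0] show ?thesis by (simp add: Y_def)
qed

lemma gsub_locally_nilpotent: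
  assumes X: "X \<in> curalg" and ad_nil: "\<And>y. y \<in> curalg \<Longrightarrow> \<exists>d. (cbr X ^^ d) y = (\<lambda>_. 0)"
    and w: "(\<rho> X ^^ m) w = 0" and u: "u \<in> gsub sc \<rho> w"
  shows "\<exists>m. (\<rho> X ^^ m) u = 0"
  using u
proof induction
  case gen
  then show ?case using w by blast
next
  case (act v y)
  then obtain m where "(\<rho> X ^^ m) v = 0" by blast
  moreover obtain d where "(cbr X ^^ d) y = (\<lambda>_. 0)" using ad_nil[OF act.hyps(2)] by blast
  ultimately show ?case using act_funpow_ad_nilpotent[OF X act.hyps(2)] by blast
next
  case (add a b)
  then obtain ma mb where ma: "(\<rho> X ^^ ma) a = 0" and mb: "(\<rho> X ^^ mb) b = 0" by blast
  have "(\<rho> X ^^ (mb + ma)) a = 0" "(\<rho> X ^^ (ma + mb)) b = 0"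
    by (simp_all only: funpow_add o_apply ma mb act_funpow_zero[OF X])
  then have "(\<rho> X ^^ (ma + mb)) (a + b) = 0" by (simp add: act_funpow_add[OF X] add.commute)
  then show ?case by blast
next
  case (smult a c)
  then obtain m where "(\<rho> X ^^ m) a = 0" by blast
  then have "(\<rho> X ^^ m) (sc c a) = 0" by (simp add: act_funpow_scale[OF X])
  then show ?case by blast
qed

lemma sl_integrable_gsub_iff:
  "sl_integrable \<rho> (gsub sc \<rho> w) \<longleftrightarrow>
     (\<forall>i j. i \<noteq> j \<longrightarrow> (\<exists>m. (\<rho> (mono (Emat i j) 0) ^^ m) w = 0))"
proof
  assume "sl_integrable \<rho> (gsub sc \<rho> w)"
  then show "\<forall>i j. i \<noteq> j \<longrightarrow> (\<exists>m. (\<rho> (mono (Emat i j) 0) ^^ m) w = 0)"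
    by (simp add: sl_integrable_def gsub.gen)
next
  assume nil: "\<forall>i j. i \<noteq> j \<longrightarrow> (\<exists>m. (\<rho> (mono (Emat i j) 0) ^^ m) w = 0)"
  have "\<exists>m. (\<rho> (mono (Emat i j) 0) ^^ m) u = 0" if ij: "i \<noteq> j" and u: "u \<in> gsub sc \<rho> w"
    for i j u
  proof -
    have X: "mono (Emat i j) 0 \<in> curalg" by (rule mono_in_curalg) (simp add: trace_Emat ij)
    have "(cbr (mono (Emat i j) 0) ^^ 3) y = (\<lambda>_. 0)" for y
      by (rule cbr_mono_0_cube) (use ij in \<open>auto simp: Emat_mult\<close>)
    moreover obtain m where "(\<rho> (mono (Emat i j) 0) ^^ m) w = 0" using nil ij by blast
    ultimately show ?thesis using gsub_locally_nilpotent[OF X _ _ u] by blast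
  qed
  then show "sl_integrable \<rho> (gsub sc \<rho> w)" by (simp add: sl_integrable_def)
qed

end

lemma b_tpos_split:
  fixes x :: "'n::{finite,linorder} cur"
  assumes x: "x \<in> b_tpos"
  obtains U D where "U \<in> nplus_cur" and "D \<in> h_tpos" and "x = cadd U D"
proof
  define U where "U = (\<lambda>k. (\<chi> a b. if a < b then x k $ a $ b else 0))"
  define D where "D = (\<lambda>k. (\<chi> a b. if a = b then x k $ a $ b else 0))"
  have fx: "finite {k. x k \<noteq> 0}" and tx: "\<And>k. trace (x k) = 0" and x0: "x 0 = 0"
    and low: "\<And>k a b. b < a \<Longrightarrow> x k $ a $ b = 0"
    using x by (auto simp: b_tpos_def curalg_def)
  have "{k. U k \<noteq> 0} \<subseteq> {k. x k \<noteq> 0}" "{k. D k \<noteq> 0} \<subseteq> {k. x k \<noteq> 0}"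
    by (auto simp: U_def D_def vec_eq_iff)
  then have "finite {k. U k \<noteq> 0}" "finite {k. D k \<noteq> 0}" using fx by (auto intro: finite_subset)
  then show "U \<in> nplus_cur" "D \<in> h_tpos"
    using tx x0 by (auto simp: nplus_cur_def h_tpos_def curalg_def U_def D_def trace_def vec_eq_iff)
  show "x = cadd U D"
    using low by (auto simp: cadd_def U_def D_def vec_eq_iff fun_eq_iff)
qed

lemma nplus_cur_split:
  fixes x :: "'n::{finite,linorder} cur"
  assumes x: "x \<in> nplus_cur"
  obtains P Q where "P \<in> nplus_1" and "Q \<in> b_tpos" and "x = cadd P Q"
proof
  define P where "P = (\<lambda>k. if k = 0 then x k else 0)"
  define Q where "Q = (\<lambda>k. if k = 0 then 0 else x k)"
  have fx: "finite {k. x k \<noteq> 0}" and tx: "\<And>k. trace (x k) = 0"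
    and low: "\<And>k a b. b \<le> a \<Longrightarrow> x k $ a $ b = 0"
    using x by (auto simp: nplus_cur_def curalg_def)
  have "{k. P k \<noteq> 0} \<subseteq> {k. x k \<noteq> 0}" "{k. Q k \<noteq> 0} \<subseteq> {k. x k \<noteq> 0}"
    by (auto simp: P_def Q_def)
  then have "finite {k. P k \<noteq> 0}" "finite {k. Q k \<noteq> 0}" using fx by (auto intro: finite_subset)
  then show "P \<in> nplus_1" "Q \<in> b_tpos"
    using tx low trace_0[unfolded mat_0]
    by (auto simp: nplus_1_def nplus_cur_def b_tpos_def curalg_def P_def Q_def)
  show "x = cadd P Q"
    by (auto simp: cadd_def P_def Q_def)
qed

lemma h_tpos_subset_b_tpos: "h_tpos \<subseteq> b_tpos"
  by (auto simp: h_tpos_def b_tpos_def)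

lemma Emat_in_nplus_cur:
  assumes "i < j" shows "mono (Emat i j) 0 \<in> nplus_cur"
proof -
  have "mono (Emat i j) 0 \<in> curalg" by (rule mono_in_curalg) (use assms in \<open>simp add: trace_Emat\<close>)
  then show ?thesis using assms by (auto simp: nplus_cur_def mono_def Emat_def)
qed

lemma Emat_diff_in_cartan: "Emat i i - Emat j j \<in> cartan"
  by (simp add: cartan_def trace_sub trace_Emat) (simp add: Emat_def)

lemma wt_Emat_diff: "wt L (Emat i i - Emat j j) = of_int (L i) - of_int (L j)"
proof -
  have "wt L (Emat i i - Emat j j)
      = (\<Sum>k\<in>UNIV. (if k = i then of_int (L k) else 0) - (if k = j then of_int (L k) else 0))"
    unfolding wt_def by (rule sum.cong) (auto simp: Emat_def)
  then show ?thesis by (simp add: sum_subtractf)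
qed

locale ordered_current_rep = current_rep sc \<rho>
  for sc :: "complex \<Rightarrow> 'v::ab_group_add \<Rightarrow> 'v" and \<rho> :: "'n::{finite,linorder} cur \<Rightarrow> 'v \<Rightarrow> 'v"
begin

lemma W_rel_imp_F_rel:
  assumes W: "W_rel sc \<rho> lam1 lam2 w"
  shows "F_rel sc \<rho> lam1 lam2 w"
proof -
  have "\<rho> x w = 0" if x: "x \<in> b_tpos" for x
  proof -
    obtain U D where U: "U \<in> nplus_cur" and D: "D \<in> h_tpos" and x: "x = cadd U D"
      using b_tpos_split[OF x] .
    then have "U \<in> curalg" "D \<in> curalg" by (auto simp: nplus_cur_def h_tpos_def)
    then show ?thesis using W U D by (simp add: x act_cadd W_rel_def)
  qed
  moreover have "nplus_1 \<subseteq> nplus_cur" by (auto simp: nplus_1_def)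
  ultimately show ?thesis using W by (auto simp: F_rel_def W_rel_def)
qed

lemma W_rel_imp_sl_integrable:
  assumes W: "W_rel sc \<rho> lam1 lam2 w"
  shows "sl_integrable \<rho> (gsub sc \<rho> w)"
  unfolding sl_integrable_gsub_iff
proof (intro allI impI)
  fix i j :: 'n assume "i \<noteq> j"
  then consider "i < j" | "j < i" by fastforce
  then show "\<exists>m. (\<rho> (mono (Emat i j) 0) ^^ m) w = 0"
  proof cases
    case 1
    then have "(\<rho> (mono (Emat i j) 0) ^^ 1) w = 0"
      using W Emat_in_nplus_cur[OF 1] by (simp add: W_rel_def)
    then show ?thesis by blast
  next
    case 2
    then show ?thesis using W unfolding W_rel_def by blast
  qed
qed

lemma F_rel_imp_nplus_cur_kills:
  assumes F: "F_rel sc \<rho> lam1 lam2 w" and x: "x \<in> nplus_cur"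
  shows "\<rho> x w = 0"
proof -
  obtain P Q where P: "P \<in> nplus_1" and Q: "Q \<in> b_tpos" and x: "x = cadd P Q"
    using nplus_cur_split[OF x] .
  then have "P \<in> curalg" "Q \<in> curalg" by (auto simp: nplus_1_def nplus_cur_def b_tpos_def)
  then show ?thesis using F P Q by (simp add: x act_cadd F_rel_def)
qed

text \<open>Dominance makes lam(h_alpha) = lam i - lam j a natural number, so that the
 sl_2 argument applies to the highest-weight vector w.\<close>
lemma F_rel_lower_power_vanishes:
  assumes "dominant lam1" and "dominant lam2"
    and F: "F_rel sc \<rho> lam1 lam2 w" and I: "sl_integrable \<rho> (gsub sc \<rho> w)" and ij: "i < j"
  shows "(\<rho> (mono (Emat j i) 0) ^^ (hval (\<lambda>k. lam1 k + lam2 k) i j + 1)) w = 0"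
proof -
  obtain n where n: "(\<rho> (mono (Emat j i) 0) ^^ n) w = 0"
    using I ij unfolding sl_integrable_gsub_iff by fastforce
  show ?thesis
  proof (rule sl2_lower_power_vanishes)
    have "i \<noteq> j" "j \<noteq> i" using ij by auto
    then show "mono (Emat i j) 0 \<in> curalg" "mono (Emat j i) 0 \<in> curalg"
      "mono (Emat i i - Emat j j) 0 \<in> curalg"
      by (auto intro!: mono_in_curalg simp: trace_Emat trace_sub)
    show "cbr (mono (Emat i j) 0) (mono (Emat j i) 0) = mono (Emat i i - Emat j j) 0"
      "cbr (mono (Emat i i - Emat j j) 0) (mono (Emat j i) 0) = cscale (-2) (mono (Emat j i) 0)"
      using \<open>i \<noteq> j\<close> by (simp_all add: cbr_Emat_swap cbr_Emat_diff_Emat)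
    show "\<rho> (mono (Emat i j) 0) w = 0"
      using F_rel_imp_nplus_cur_kills[OF F Emat_in_nplus_cur[OF ij]] .
    have "lam1 j \<le> lam1 i" "lam2 j \<le> lam2 i" using assms(1,2) ij by (auto simp: dominant_def)
    then have "wt (\<lambda>k. lam1 k + lam2 k) (Emat i i - Emat j j)
        = of_nat (hval (\<lambda>k. lam1 k + lam2 k) i j)"
      by (simp add: wt_Emat_diff hval_def)
    moreover have "\<rho> (mono (Emat i i - Emat j j) 0) w = sc (wt (\<lambda>k. lam1 k + lam2 k) (Emat i i - Emat j j)) w"
      using F Emat_diff_in_cartan unfolding F_rel_def by blast
    ultimately show "\<rho> (mono (Emat i i - Emat j j) 0) w = sc (of_nat (hval (\<lambda>k. lam1 k + lam2 k) i j)) w"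
      by simp
    show "(\<rho> (mono (Emat j i) 0) ^^ n) w = 0" by (fact n)
  qed
qed

end

theorem proposition3p1:
  fixes lam1 lam2 :: "'n::{finite,linorder} \<Rightarrow> int"
    and sc :: "complex \<Rightarrow> 'v::ab_group_add \<Rightarrow> 'v"
    and \<rho> :: "'n cur \<Rightarrow> 'v \<Rightarrow> 'v"
    and w :: 'v
  assumes "dominant lam1" and "dominant lam2" and "is_rep sc \<rho>"
  shows "W_rel sc \<rho> lam1 lam2 w \<longleftrightarrow>
           (F_rel sc \<rho> lam1 lam2 w \<and> sl_integrable \<rho> (gsub sc \<rho> w))"
proof -
  interpret ordered_current_rep sc \<rho> by unfold_locales (rule assms(3))
  show ?thesis
  proof
    assume "W_rel sc \<rho> lam1 lam2 w"
    then show "F_rel sc \<rho> lam1 lam2 w \<and> sl_integrable \<rho> (gsub sc \<rho> w)"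
      using W_rel_imp_F_rel W_rel_imp_sl_integrable by blast
  next
    assume "F_rel sc \<rho> lam1 lam2 w \<and> sl_integrable \<rho> (gsub sc \<rho> w)"
    then have F: "F_rel sc \<rho> lam1 lam2 w" and I: "sl_integrable \<rho> (gsub sc \<rho> w)" by auto
    then have "\<forall>x\<in>h_tpos. \<rho> x w = 0" using h_tpos_subset_b_tpos by (auto simp: F_rel_def)
    then show "W_rel sc \<rho> lam1 lam2 w"
      using F F_rel_imp_nplus_cur_kills[OF F] F_rel_lower_power_vanishes[OF assms(1,2) F I]
      unfolding W_rel_def F_rel_def by blast
  qed
qed

end
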